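(* Let $K\ge3$ and let $X_1,\dots,X_K\in\mathbb{R}^d$ be i.i.d. with an arbitrary common distribution having a density on $\mathbb{R}^d$ and bounded support ($\|X_i\|_2\le x_{\max}$). Fix $\beta\in\mathbb{R}^d$ and an integer $k\in\{2,\dots,K-1\}$. Then $$\mathbb{E}\big[X_kX_k^\top\mathbb{1}\{X_1^\top\beta<\dots<X_k^\top\beta<\dots<X_K^\top\beta\}\big]\preccurlyeq C_{\mathcal{X}}\,\mathbb{E}\big[(X_1X_1^\top+X_KX_K^\top)\mathbb{1}\{X_1^\top\beta<\dots<X_K^\top\beta\}\big],$$ with $C_{\mathcal{X}}=\binom{K-1}{\lceil (K-1)/2\rceil}$.
   Context: $\preccurlyeq$ denotes the Loewner (positive semidefinite) order. *)

theory Defs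
  imports "HOL-Probability.Probability"
begin

definition outer_self :: "real^'n \<Rightarrow> real^'n^'n" where
  "outer_self x = (\<chi> i j. x $ i * x $ j)"

definition loewner_le :: "real^'n^'n \<Rightarrow> real^'n^'n \<Rightarrow> bool" where
  "loewner_le A B \<longleftrightarrow> (\<forall>v. v \<bullet> (A *v v) \<le> v \<bullet> (B *v v))"

definition sorted_event :: "nat \<Rightarrow> (nat \<Rightarrow> 'w \<Rightarrow> real^'n) \<Rightarrow> real^'n \<Rightarrow> 'w set" where
  "sorted_event K X \<beta> = {\<omega>. \<forall>i\<in>{1..<K}. X i \<omega> \<bullet> \<beta> < X (Suc i) \<omega> \<bullet> \<beta>}"

end

theory Submission
  imports Defs
begin

(* Let u y = y \<bullet> \<beta> and let p y, q y be the probabilities that a sample has u below, resp. above,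
   u y. For \<beta> \<noteq> 0 the hyperplanes {u = t} are null for the density, so there are no ties.
   Conditioning on X_k = y, the sorted event has probability
     p(y)^(k-1)/(k-1)! * q(y)^(K-k)/(K-k)!,
   because m i.i.d. samples beyond a level are in a prescribed order with probability
   (tail probability)^m/m!, a consequence of the identity
     int_{u > c} F(u)^n dmu = F(c)^(n+1)/(n+1)
   for the upper tail F. The extreme positions k = 1 and k = K give q^n/n! and p^n/n! with
   n = K - 1, and for a + b = n
     p^a q^b/(a! b!) = (n choose a) p^a q^b/n! <= (n choose n div 2) (p^n + q^n)/n!.
   Integrating against (v \<bullet> y)^2 yields the inequality of quadratic forms for every v. *)

section \<open>Powers and binomial coefficients\<close>

lemma power_mult_power_le_add:
  fixes p q :: real
  assumes "0 \<le> p" "p \<le> 1" "0 \<le> q" "q \<le> 1" "a + b = n"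
  shows "p ^ a * q ^ b \<le> p ^ n + q ^ n"
proof -
  have "p ^ a * q ^ b \<le> max p q ^ a * max p q ^ b"
    using assms by (intro mult_mono power_mono) auto
  also have "\<dots> = max p q ^ n"
    using assms by (simp add: power_add[symmetric])
  also have "\<dots> \<le> p ^ n + q ^ n"
    using assms by (auto simp: max_def)
  finally show ?thesis .
qed

lemma power_div_fact_mult_le:
  fixes p q :: real
  assumes "0 \<le> p" "p \<le> 1" "0 \<le> q" "q \<le> 1" "a + b = n"
  shows "p ^ a / fact a * (q ^ b / fact b) \<le> real (n choose (n div 2)) * (p ^ n / fact n + q ^ n / fact n)"
proof -
  have nb: "n - a = b" "a \<le> n"
    using assms(5) by auto
  have "real (n choose a) = fact n / (fact a * fact b)"
    using binomial_fact[OF nb(2)] unfolding nb(1) by simp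
  then have "p ^ a / fact a * (q ^ b / fact b) = real (n choose a) * (p ^ a * q ^ b) / fact n"
    by simp
  also have "\<dots> \<le> real (n choose (n div 2)) * (p ^ n + q ^ n) / fact n"
    using assms by (intro divide_right_mono mult_mono power_mult_power_le_add) (auto simp: binomial_maximum)
  also have "\<dots> = real (n choose (n div 2)) * (p ^ n / fact n + q ^ n / fact n)"
    by (simp only: add_divide_distrib[symmetric] times_divide_eq_right)
  finally show ?thesis .
qed

lemma binomial_ceiling_half: "n choose nat \<lceil>real n / 2\<rceil> = n choose (n div 2)"
proof -
  have "nat \<lceil>real n / 2\<rceil> = n - n div 2"
  proof (cases "even n")
    case False
    then obtain m where n: "n = 2 * m + 1" by (elim oddE)
    have "\<lceil>real n / 2\<rceil> = int m + 1"
      unfolding n by (simp add: ceiling_eq_iff)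
    then show ?thesis using n by simp
  qed (auto elim!: evenE)
  then show ?thesis
    by (simp add: binomial_symmetric[symmetric])
qed

section \<open>Upper tails of an atomless distribution\<close>

definition upper_tail :: "'a measure \<Rightarrow> ('a \<Rightarrow> real) \<Rightarrow> real \<Rightarrow> ennreal" where
  "upper_tail M u t = emeasure M {w \<in> space M. t < u w}"

lemma upper_tail_nn_integral:
  assumes [measurable]: "u \<in> borel_measurable M"
  shows "upper_tail M u t = (\<integral>\<^sup>+w. (if t < u w then 1 else 0) \<partial>M)"
proof -
  have "(\<integral>\<^sup>+w. (if t < u w then 1 else 0) \<partial>M) = (\<integral>\<^sup>+w. indicator {w \<in> space M. t < u w} w \<partial>M)"
    by (intro nn_integral_cong) (auto simp: indicator_def)
  also have "\<dots> = upper_tail M u t"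
    unfolding upper_tail_def by (rule nn_integral_indicator) measurable
  finally show ?thesis ..
qed

context prob_space
begin

lemma measurable_upper_tail[measurable]:
  assumes [measurable]: "u \<in> borel_measurable M" "g \<in> borel_measurable N"
  shows "(\<lambda>z. upper_tail M u (g z)) \<in> borel_measurable N"
  unfolding upper_tail_nn_integral[OF assms(1)] by measurable

context
  fixes u :: "'a \<Rightarrow> real"
  assumes u[measurable]: "u \<in> borel_measurable M"
    and no_ties: "\<And>t. emeasure M {w \<in> space M. u w = t} = 0"
begin

lemma nn_integral_upper_tail_split:
  assumes [measurable]: "h \<in> borel_measurable M" and "c < t"
  shows "(\<integral>\<^sup>+z. (if c < u z then h z else 0) \<partial>M) =
    (\<integral>\<^sup>+z. (if c < u z \<and> u z < t then h z else 0) \<partial>M) + (\<integral>\<^sup>+z. (if t < u z then h z else 0) \<partial>M)"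
proof -
  have "AE z in M. u z \<noteq> t"
    by (rule AE_I[where N="{w\<in>space M. u w = t}"]) (auto simp: no_ties null_sets_def)
  then have "AE z in M. (if c < u z then h z else 0) =
      (if c < u z \<and> u z < t then h z else 0) + (if t < u z then h z else 0)"
    by eventually_elim (use \<open>c < t\<close> in auto)
  then have "(\<integral>\<^sup>+z. (if c < u z then h z else 0) \<partial>M) =
    (\<integral>\<^sup>+z. (if c < u z \<and> u z < t then h z else 0) + (if t < u z then h z else 0) \<partial>M)"
    by (rule nn_integral_cong_AE)
  also have "\<dots> = (\<integral>\<^sup>+z. (if c < u z \<and> u z < t then h z else 0) \<partial>M) + (\<integral>\<^sup>+z. (if t < u z then h z else 0) \<partial>M)"
    by (rule nn_integral_add) auto
  finally show ?thesis .
qed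

lemma nn_integral_upper_tail_Fubini:
  assumes [measurable]: "h \<in> borel_measurable M"
  shows "(\<integral>\<^sup>+w. (if c < u w then \<integral>\<^sup>+z. (if c < u z \<and> u z < u w then h z else 0) \<partial>M else 0) \<partial>M) =
    (\<integral>\<^sup>+z. (if c < u z then h z * upper_tail M u (u z) else 0) \<partial>M)"
proof -
  interpret pair_sigma_finite M M by unfold_locales
  have "(\<integral>\<^sup>+w. (if c < u w then \<integral>\<^sup>+z. (if c < u z \<and> u z < u w then h z else 0) \<partial>M else 0) \<partial>M) =
     (\<integral>\<^sup>+w. \<integral>\<^sup>+z. (if c < u w \<and> c < u z \<and> u z < u w then h z else 0) \<partial>M \<partial>M)"
    by (rule nn_integral_cong) (auto intro!: nn_integral_cong)
  also have "\<dots> = (\<integral>\<^sup>+z. \<integral>\<^sup>+w. (if c < u w \<and> c < u z \<and> u z < u w then h z else 0) \<partial>M \<partial>M)"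
    by (rule Fubini') measurable
  also have "\<dots> = (\<integral>\<^sup>+z. (if c < u z then h z * upper_tail M u (u z) else 0) \<partial>M)"
    unfolding upper_tail_nn_integral[OF u]
    by (rule nn_integral_cong) (auto simp: nn_integral_cmult[symmetric] intro!: nn_integral_cong)
  finally show ?thesis .
qed

lemma nn_integral_upper_tail_power:
  "of_nat (Suc n) * (\<integral>\<^sup>+z. (if c < u z then upper_tail M u (u z) ^ n else 0) \<partial>M) =
    upper_tail M u c ^ Suc n"
proof (induction n arbitrary: c)
  case 0
  show ?case unfolding power_0 by (simp add: upper_tail_nn_integral[OF u])
next
  case (Suc n)
  txt \<open>Multiply by the tail at c and split the integrand at the level u w: the lower part
    is handled by Fubini, the upper part by the induction hypothesis.\<close>
  define \<Phi> where "\<Phi> m t = (\<integral>\<^sup>+z. (if t < u z then upper_tail M u (u z) ^ m else 0) \<partial>M)" for m t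
  have [measurable]: "\<Phi> m \<in> borel_measurable borel" for m
    unfolding \<Phi>_def by measurable
  have IH: "of_nat (Suc n) * \<Phi> n t = upper_tail M u t ^ Suc n" for t
    using Suc.IH unfolding \<Phi>_def .
  have "upper_tail M u c * \<Phi> n c = (\<integral>\<^sup>+w. (if c < u w then \<Phi> n c else 0) \<partial>M)"
    unfolding upper_tail_nn_integral[OF u]
    by (subst nn_integral_multc[symmetric]) (auto intro!: nn_integral_cong)
  also have "\<dots> = (\<integral>\<^sup>+w. (if c < u w then
      (\<integral>\<^sup>+z. (if c < u z \<and> u z < u w then upper_tail M u (u z) ^ n else 0) \<partial>M) else 0) +
      (if c < u w then \<Phi> n (u w) else 0) \<partial>M)"
    unfolding \<Phi>_def by (intro nn_integral_cong) (simp add: nn_integral_upper_tail_split)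
  also have "\<dots> = (\<integral>\<^sup>+w. (if c < u w then
      (\<integral>\<^sup>+z. (if c < u z \<and> u z < u w then upper_tail M u (u z) ^ n else 0) \<partial>M) else 0) \<partial>M) +
      (\<integral>\<^sup>+w. (if c < u w then \<Phi> n (u w) else 0) \<partial>M)"
    by (rule nn_integral_add) auto
  also have "(\<integral>\<^sup>+w. (if c < u w then
      (\<integral>\<^sup>+z. (if c < u z \<and> u z < u w then upper_tail M u (u z) ^ n else 0) \<partial>M) else 0) \<partial>M) =
      \<Phi> (Suc n) c"
    by (subst nn_integral_upper_tail_Fubini) (auto simp: \<Phi>_def mult.commute intro!: nn_integral_cong)
  finally have step: "upper_tail M u c * \<Phi> n c =
      \<Phi> (Suc n) c + (\<integral>\<^sup>+w. (if c < u w then \<Phi> n (u w) else 0) \<partial>M)" .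
  have "of_nat (Suc n) * (\<integral>\<^sup>+w. (if c < u w then \<Phi> n (u w) else 0) \<partial>M) =
      (\<integral>\<^sup>+w. of_nat (Suc n) * (if c < u w then \<Phi> n (u w) else 0) \<partial>M)"
    by (rule nn_integral_cmult[symmetric]) measurable
  also have "\<dots> = \<Phi> (Suc n) c"
    unfolding \<Phi>_def[of "Suc n" c] by (intro nn_integral_cong) (simp add: IH del: of_nat_Suc)
  finally have "upper_tail M u c * (of_nat (Suc n) * \<Phi> n c) = of_nat (Suc (Suc n)) * \<Phi> (Suc n) c"
    using step by (simp add: algebra_simps)
  then show ?case unfolding IH by (simp add: \<Phi>_def)
qed

end

end

section \<open>Sorted i.i.d. samples\<close>

definition sorted_by :: "('a \<Rightarrow> real) \<Rightarrow> ('i \<Rightarrow> nat) \<Rightarrow> 'i set \<Rightarrow> ('i \<Rightarrow> 'a) \<Rightarrow> bool" where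
  "sorted_by u \<pi> J x \<longleftrightarrow> (\<forall>i\<in>J. \<forall>j\<in>J. \<pi> i < \<pi> j \<longrightarrow> u (x i) < u (x j))"

definition sorted_above_prob ::
    "'a measure \<Rightarrow> ('a \<Rightarrow> real) \<Rightarrow> ('i \<Rightarrow> nat) \<Rightarrow> 'i set \<Rightarrow> real \<Rightarrow> ennreal" where
  "sorted_above_prob M u \<pi> J t = emeasure (PiM J (\<lambda>_. M))
     {x \<in> space (PiM J (\<lambda>_. M)). sorted_by u \<pi> J x \<and> (\<forall>j\<in>J. t < u (x j))}"

lemma sorted_by_insert_least:
  assumes "j \<notin> J" "\<And>i. i \<in> J \<Longrightarrow> \<pi> j < \<pi> i"
  shows "(sorted_by u \<pi> (insert j J) (x(j := y)) \<and> (\<forall>i\<in>insert j J. c < u ((x(j := y)) i))) \<longleftrightarrow>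
    c < u y \<and> sorted_by u \<pi> J x \<and> (\<forall>i\<in>J. u y < u (x i))"
proof -
  have [simp]: "(x(j := y)) i = x i" if "i \<in> J" for i using assms(1) that by auto
  have [simp]: "\<not> \<pi> i < \<pi> j" if "i \<in> J" for i using assms(2)[OF that] by simp
  have [simp]: "\<pi> j < \<pi> i" if "i \<in> J" for i using assms(2)[OF that] .
  show ?thesis
    unfolding sorted_by_def using assms(1) by (auto simp: ball_conj_distrib)
qed

lemma sorted_by_restrict: "sorted_by u \<pi> J (restrict x J) \<longleftrightarrow> sorted_by u \<pi> J x"
  by (simp add: sorted_by_def)

text \<open>The samples before position k are sorted by \<open>- u\<close> in reversed order, so that both
  halves become samples sorted above the level of the k-th one.\<close>

lemma sorted_by_split_at:
  assumes k: "k \<in> {1..K}"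
  shows "sorted_by u id {1..K} (x(k := y)) \<longleftrightarrow>
    (sorted_by (\<lambda>z. - u z) (\<lambda>i. K - i) {1..<k} x \<and> (\<forall>i\<in>{1..<k}. - u y < - u (x i))) \<and>
    (sorted_by u id {k<..K} x \<and> (\<forall>j\<in>{k<..K}. u y < u (x j)))"
  unfolding sorted_by_def
proof safe
  assume H: "\<forall>i\<in>{1..K}. \<forall>j\<in>{1..K}. id i < id j \<longrightarrow> u ((x(k := y)) i) < u ((x(k := y)) j)"
  show "- u (x i) < - u (x j)" if "i \<in> {1..<k}" "j \<in> {1..<k}" "K - i < K - j" for i j
    using H[rule_format, of j i] that k by auto
  show "- u y < - u (x i)" if "i \<in> {1..<k}" for i
    using H[rule_format, of i k] that k by auto
  show "u (x i) < u (x j)" if "i \<in> {k<..K}" "j \<in> {k<..K}" "id i < id j" for i j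
    using H[rule_format, of i j] that k by auto
  show "u y < u (x j)" if "j \<in> {k<..K}" for j
    using H[rule_format, of k j] that k by auto
next
  fix i j
  assume L: "\<forall>i\<in>{1..<k}. \<forall>j\<in>{1..<k}. K - i < K - j \<longrightarrow> - u (x i) < - u (x j)"
    and Ly: "\<forall>i\<in>{1..<k}. - u y < - u (x i)"
    and R: "\<forall>i\<in>{k<..K}. \<forall>j\<in>{k<..K}. id i < id j \<longrightarrow> u (x i) < u (x j)"
    and Ry: "\<forall>j\<in>{k<..K}. u y < u (x j)"
    and ij: "i \<in> {1..K}" "j \<in> {1..K}" "id i < id j"
  consider "j < k" | "j = k" | "i < k" "k < j" | "i = k" | "k < i"
    using ij by fastforce
  then show "u ((x(k := y)) i) < u ((x(k := y)) j)"
  proof cases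
    case 1 then show ?thesis using L[rule_format, of j i] ij k by auto
  next
    case 2 then show ?thesis using Ly ij by auto
  next
    case 3 then show ?thesis using Ly[rule_format, of i] Ry[rule_format, of j] ij by auto
  next
    case 4 then show ?thesis using Ry ij by auto
  next
    case 5 then show ?thesis using R[rule_format, of i j] ij by auto
  qed
qed

lemma pred_sorted_by:
  assumes [measurable]: "u \<in> borel_measurable M" and "finite J" "J \<subseteq> I"
  shows "Measurable.pred (PiM I (\<lambda>_. M)) (sorted_by u \<pi> J)"
  unfolding sorted_by_def
proof (intro pred_intros_finite pred_intros_logic \<open>finite J\<close>)
  fix i j assume "i \<in> J" "j \<in> J"
  with \<open>J \<subseteq> I\<close> have "i \<in> I" "j \<in> I" by auto
  then show "Measurable.pred (PiM I (\<lambda>_. M)) (\<lambda>x. u (x i) < u (x j))" by measurable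
qed measurable

lemma pred_all_above:
  fixes u :: "'a \<Rightarrow> real"
  assumes [measurable]: "u \<in> borel_measurable M" and "finite J" "J \<subseteq> I"
  shows "Measurable.pred (PiM I (\<lambda>_. M)) (\<lambda>x. \<forall>j\<in>J. t < u (x j))"
proof (intro pred_intros_finite \<open>finite J\<close>)
  fix j assume "j \<in> J"
  with \<open>J \<subseteq> I\<close> have "j \<in> I" by auto
  then show "Measurable.pred (PiM I (\<lambda>_. M)) (\<lambda>x. t < u (x j))"
    by measurable
qed

lemma (in product_sigma_finite) nn_integral_PiM_Un_mult:
  assumes "I \<inter> J = {}" "finite I" "finite J"
    and [measurable]: "f \<in> borel_measurable (PiM I M)" "g \<in> borel_measurable (PiM J M)"
  shows "(\<integral>\<^sup>+x. f (restrict x I) * g (restrict x J) \<partial>PiM (I \<union> J) M) =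
    (\<integral>\<^sup>+x. f x \<partial>PiM I M) * (\<integral>\<^sup>+y. g y \<partial>PiM J M)"
proof -
  have [measurable]: "(\<lambda>x. restrict x I) \<in> PiM (I \<union> J) M \<rightarrow>\<^sub>M PiM I M"
    "(\<lambda>x. restrict x J) \<in> PiM (I \<union> J) M \<rightarrow>\<^sub>M PiM J M"
    by (auto intro: measurable_restrict_subset)
  have "(\<integral>\<^sup>+x. f (restrict x I) * g (restrict x J) \<partial>PiM (I \<union> J) M) =
    (\<integral>\<^sup>+x. \<integral>\<^sup>+y. f x * g y \<partial>PiM J M \<partial>PiM I M)"
    using assms(1-3) by (subst product_nn_integral_fold)
      (auto simp: space_PiM intro!: nn_integral_cong)
  also have "\<dots> = (\<integral>\<^sup>+x. f x \<partial>PiM I M) * (\<integral>\<^sup>+y. g y \<partial>PiM J M)"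
    by (simp add: nn_integral_cmult nn_integral_multc)
  finally show ?thesis .
qed

context prob_space
begin

lemma sorted_above_prob_nn_integral:
  assumes [measurable]: "u \<in> borel_measurable M" and "finite J"
  shows "sorted_above_prob M u \<pi> J t =
    (\<integral>\<^sup>+x. (if sorted_by u \<pi> J x \<and> (\<forall>j\<in>J. t < u (x j)) then 1 else 0) \<partial>PiM J (\<lambda>_. M))"
proof -
  have "(\<integral>\<^sup>+x. (if sorted_by u \<pi> J x \<and> (\<forall>j\<in>J. t < u (x j)) then 1 else 0) \<partial>PiM J (\<lambda>_. M)) =
    (\<integral>\<^sup>+x. indicator {x \<in> space (PiM J (\<lambda>_. M)). sorted_by u \<pi> J x \<and> (\<forall>j\<in>J. t < u (x j))} x
      \<partial>PiM J (\<lambda>_. M))"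
    by (intro nn_integral_cong) (auto simp: indicator_def)
  also have "\<dots> = sorted_above_prob M u \<pi> J t"
    unfolding sorted_above_prob_def
    using pred_sorted_by[OF assms(1,2) order_refl] pred_all_above[OF assms(1,2) order_refl]
    by (intro nn_integral_indicator) measurable
  finally show ?thesis ..
qed

lemma measurable_sorted_above_prob[measurable]:
  assumes [measurable]: "u \<in> borel_measurable M" "g \<in> borel_measurable N" and "finite J"
  shows "(\<lambda>z. sorted_above_prob M u \<pi> J (g z)) \<in> borel_measurable N"
proof -
  interpret P: prob_space "PiM J (\<lambda>_. M)" by (intro prob_space_PiM prob_space_axioms)
  note [measurable] = pred_sorted_by[OF assms(1,3) order_refl] pred_all_above[OF assms(1,3) order_refl]
  show ?thesis
    unfolding sorted_above_prob_nn_integral[OF assms(1,3)] using \<open>finite J\<close> by measurable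
qed

lemma sorted_above_prob_insert_least:
  assumes [measurable]: "u \<in> borel_measurable M"
    and "finite J" "j \<notin> J" "\<And>i. i \<in> J \<Longrightarrow> \<pi> j < \<pi> i"
  shows "sorted_above_prob M u \<pi> (insert j J) c =
    (\<integral>\<^sup>+y. (if c < u y then sorted_above_prob M u \<pi> J (u y) else 0) \<partial>M)"
proof -
  interpret product_sigma_finite "\<lambda>_. M" by unfold_locales
  note [measurable] = pred_sorted_by[OF assms(1) finite_insert[THEN iffD2, OF \<open>finite J\<close>] order_refl]
    pred_all_above[OF assms(1) \<open>finite J\<close> subset_insertI]
  have key: "(sorted_by u \<pi> (insert j J) (x(j := y)) \<and> (\<forall>i\<in>insert j J. c < u ((x(j := y)) i))) \<longleftrightarrow>
      c < u y \<and> sorted_by u \<pi> J x \<and> (\<forall>i\<in>J. u y < u (x i))" for x y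
    using assms(3,4) by (rule sorted_by_insert_least)
  have "sorted_above_prob M u \<pi> (insert j J) c = (\<integral>\<^sup>+y. \<integral>\<^sup>+x.
      (if sorted_by u \<pi> (insert j J) (x(j := y)) \<and> (\<forall>i\<in>insert j J. c < u ((x(j := y)) i)) then 1 else 0)
      \<partial>PiM J (\<lambda>_. M) \<partial>M)"
    unfolding sorted_above_prob_nn_integral[OF assms(1) finite_insert[THEN iffD2, OF \<open>finite J\<close>]]
    using assms(2,3) by (intro product_nn_integral_insert_rev) auto
  also have "\<dots> = (\<integral>\<^sup>+y. (if c < u y then sorted_above_prob M u \<pi> J (u y) else 0) \<partial>M)"
    unfolding key sorted_above_prob_nn_integral[OF assms(1,2)]
    by (intro nn_integral_cong) auto
  finally show ?thesis .
qed

lemma fact_mult_sorted_above_prob: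
  assumes [measurable]: "u \<in> borel_measurable M"
    and no_ties: "\<And>t. emeasure M {w \<in> space M. u w = t} = 0"
    and "finite J" "inj_on \<pi> J"
  shows "fact (card J) * sorted_above_prob M u \<pi> J c = upper_tail M u c ^ card J"
  using assms(3,4)
  \<comment> \<open>ranking by \<open>- \<pi>\<close> makes the inserted element the one of least rank\<close>
proof (induction J arbitrary: c rule: finite_ranking_induct[where f="\<lambda>i. - int (\<pi> i)"])
  case empty
  show ?case by (simp add: sorted_above_prob_def PiM_empty sorted_by_def)
next
  case (insert j J)
  show ?case
  proof (cases "j \<in> J")
    case True
    then show ?thesis using insert by (simp add: insert_absorb)
  next
    case False
    have least: "\<pi> j < \<pi> i" if "i \<in> J" for i
      using insert.hyps(2)[OF that] insert.prems False that by (auto simp: inj_on_def)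
    have IH: "fact (card J) * sorted_above_prob M u \<pi> J t = upper_tail M u t ^ card J" for t
      using insert.IH insert.prems by simp
    have "fact (card (insert j J)) * sorted_above_prob M u \<pi> (insert j J) c =
      of_nat (Suc (card J)) *
        (\<integral>\<^sup>+y. fact (card J) * (if c < u y then sorted_above_prob M u \<pi> J (u y) else 0) \<partial>M)"
      using insert.hyps(1) False
      by (simp add: sorted_above_prob_insert_least least nn_integral_cmult[symmetric] algebra_simps)
    also have "\<dots> = of_nat (Suc (card J)) *
        (\<integral>\<^sup>+y. (if c < u y then upper_tail M u (u y) ^ card J else 0) \<partial>M)"
      by (intro arg_cong2[where f="(*)"] refl nn_integral_cong) (simp add: IH)
    also have "\<dots> = upper_tail M u c ^ card (insert j J)"
      using nn_integral_upper_tail_power[OF assms(1,2)] insert.hyps(1) False by simp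
    finally show ?thesis .
  qed
qed

lemma sorted_above_prob_eq:
  assumes [measurable]: "u \<in> borel_measurable M"
    and no_ties: "\<And>t. emeasure M {w \<in> space M. u w = t} = 0"
    and "finite J" "inj_on \<pi> J"
  shows "sorted_above_prob M u \<pi> J c = ennreal (measure M {w \<in> space M. c < u w} ^ card J / fact (card J))"
proof -
  let ?q = "measure M {w \<in> space M. c < u w}"
  have "fact (card J) * sorted_above_prob M u \<pi> J c = ennreal (?q ^ card J)"
    using fact_mult_sorted_above_prob[OF assms] by (simp add: upper_tail_def emeasure_eq_measure ennreal_power)
  also have "\<dots> = ennreal (fact (card J)) * ennreal (?q ^ card J / fact (card J))"
    by (subst ennreal_mult'[symmetric]) simp_all
  finally show ?thesis
    unfolding ennreal_fact by (simp add: ennreal_mult_cancel_left)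
qed

lemma nn_integral_sorted_by_split:
  fixes u :: "'a \<Rightarrow> real"
  assumes [measurable]: "u \<in> borel_measurable M" "g \<in> borel_measurable M"
    and k: "k \<in> {1..K}"
  shows "(\<integral>\<^sup>+x. g (x k) * (if sorted_by u id {1..K} x then 1 else 0) \<partial>PiM {1..K} (\<lambda>_. M)) =
    (\<integral>\<^sup>+y. g y * (sorted_above_prob M (\<lambda>z. - u z) (\<lambda>i. K - i) {1..<k} (- u y) *
      sorted_above_prob M u id {k<..K} (u y)) \<partial>M)"
proof -
  interpret product_sigma_finite "\<lambda>_. M" by unfold_locales
  define L where "L = {1..<k}"
  define R where "R = {k<..K}"
  have LR: "L \<inter> R = {}" "finite L" "finite R" "k \<notin> L \<union> R" "{1..K} = insert k (L \<union> R)"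
    using k by (auto simp: L_def R_def)
  define a where "a y x = (if sorted_by (\<lambda>z. - u z) (\<lambda>i. K - i) L x \<and> (\<forall>i\<in>L. - u y < - u (x i))
    then 1 else 0 :: ennreal)" for y x
  define b where "b y x = (if sorted_by u id R x \<and> (\<forall>j\<in>R. u y < u (x j)) then 1 else 0 :: ennreal)" for y x
  have [measurable]: "a y \<in> borel_measurable (PiM L (\<lambda>_. M))" "b y \<in> borel_measurable (PiM R (\<lambda>_. M))" for y
    unfolding a_def b_def
    using pred_sorted_by[where u="\<lambda>z. - u z" and J=L and I=L] pred_all_above[where u="\<lambda>z. - u z" and J=L and I=L]
      pred_sorted_by[where u=u and J=R and I=R] pred_all_above[where u=u and J=R and I=R] LR(2,3)
    by measurable
  have [measurable]: "Measurable.pred (PiM {1..K} (\<lambda>_. M)) (sorted_by u id {1..K})"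
    by (rule pred_sorted_by) auto
  define F where "F x = g (x k) * (if sorted_by u id {1..K} x then 1 else 0 :: ennreal)" for x
  have "F \<in> borel_measurable (PiM (insert k (L \<union> R)) (\<lambda>_. M))"
    unfolding F_def LR(5)[symmetric] using k by measurable
  then have "integral\<^sup>N (PiM {1..K} (\<lambda>_. M)) F =
      (\<integral>\<^sup>+y. \<integral>\<^sup>+x. F (x(k := y)) \<partial>PiM (L \<union> R) (\<lambda>_. M) \<partial>M)"
    unfolding LR(5) using LR by (intro product_nn_integral_insert_rev) auto
  also have "\<dots> = (\<integral>\<^sup>+y. \<integral>\<^sup>+x. g y * (a y (restrict x L) * b y (restrict x R)) \<partial>PiM (L \<union> R) (\<lambda>_. M) \<partial>M)"
    unfolding F_def sorted_by_split_at[OF k] using LR(4)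
    by (intro nn_integral_cong) (auto simp: a_def b_def sorted_by_restrict L_def R_def)
  also have "\<dots> = (\<integral>\<^sup>+y. g y * (sorted_above_prob M (\<lambda>z. - u z) (\<lambda>i. K - i) L (- u y) *
      sorted_above_prob M u id R (u y)) \<partial>M)"
  proof (intro nn_integral_cong)
    fix y
    have [measurable]: "(\<lambda>x. restrict x L) \<in> PiM (L \<union> R) (\<lambda>_. M) \<rightarrow>\<^sub>M PiM L (\<lambda>_. M)"
      "(\<lambda>x. restrict x R) \<in> PiM (L \<union> R) (\<lambda>_. M) \<rightarrow>\<^sub>M PiM R (\<lambda>_. M)"
      by (auto intro: measurable_restrict_subset)
    have "(\<integral>\<^sup>+x. g y * (a y (restrict x L) * b y (restrict x R)) \<partial>PiM (L \<union> R) (\<lambda>_. M)) =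
      g y * ((\<integral>\<^sup>+x. a y x \<partial>PiM L (\<lambda>_. M)) * (\<integral>\<^sup>+x. b y x \<partial>PiM R (\<lambda>_. M)))"
      using LR by (subst nn_integral_cmult) (simp_all add: nn_integral_PiM_Un_mult)
    then show "(\<integral>\<^sup>+x. g y * (a y (restrict x L) * b y (restrict x R)) \<partial>PiM (L \<union> R) (\<lambda>_. M)) =
      g y * (sorted_above_prob M (\<lambda>z. - u z) (\<lambda>i. K - i) L (- u y) * sorted_above_prob M u id R (u y))"
      using LR by (simp add: sorted_above_prob_nn_integral a_def b_def)
  qed
  finally show ?thesis unfolding F_def L_def R_def .
qed

lemma nn_integral_order_statistic:
  fixes u :: "'a \<Rightarrow> real"
  assumes [measurable]: "u \<in> borel_measurable M" "g \<in> borel_measurable M"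
    and no_ties: "\<And>t. emeasure M {w \<in> space M. u w = t} = 0"
    and j: "j \<in> {1..K}"
  shows "(\<integral>\<^sup>+x. g (x j) * (if sorted_by u id {1..K} x then 1 else 0) \<partial>PiM {1..K} (\<lambda>_. M)) =
    (\<integral>\<^sup>+y. g y * ennreal (measure M {w \<in> space M. u w < u y} ^ (j - 1) / fact (j - 1) *
      (measure M {w \<in> space M. u y < u w} ^ (K - j) / fact (K - j))) \<partial>M)"
proof -
  have no_ties': "emeasure M {w \<in> space M. - u w = t} = 0" for t
  proof -
    have "{w \<in> space M. - u w = t} = {w \<in> space M. u w = - t}" by auto
    then show ?thesis using no_ties by simp
  qed
  have [measurable]: "(\<lambda>z. - u z) \<in> borel_measurable M"
    by measurable
  have "inj_on (\<lambda>i. K - i) {1..<j}"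
    using j by (auto simp: inj_on_def)
  from sorted_above_prob_eq[OF _ no_ties' _ this]
  have L: "sorted_above_prob M (\<lambda>z. - u z) (\<lambda>i. K - i) {1..<j} (- u y) =
      ennreal (measure M {w \<in> space M. u w < u y} ^ (j - 1) / fact (j - 1))" for y
    by simp
  have R: "sorted_above_prob M u id {j<..K} (u y) =
      ennreal (measure M {w \<in> space M. u y < u w} ^ (K - j) / fact (K - j))" for y
    using sorted_above_prob_eq[OF assms(1) no_ties, of "{j<..K}" id "u y"] by simp
  show ?thesis
    unfolding nn_integral_sorted_by_split[OF assms(1,2) j] L R
    by (intro nn_integral_cong, subst ennreal_mult) simp_all
qed

lemma nn_integral_order_statistic_le:
  fixes u :: "'a \<Rightarrow> real"
  assumes [measurable]: "u \<in> borel_measurable M" "g \<in> borel_measurable M"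
    and no_ties: "\<And>t. emeasure M {w \<in> space M. u w = t} = 0"
    and k: "k \<in> {1..K}"
  defines "E j \<equiv> \<integral>\<^sup>+x. g (x j) * (if sorted_by u id {1..K} x then 1 else 0) \<partial>PiM {1..K} (\<lambda>_. M)"
  shows "E k \<le> of_nat ((K - 1) choose ((K - 1) div 2)) * (E 1 + E K)"
proof -
  define n where "n = K - 1"
  define p where "p y = measure M {w \<in> space M. u w < u y}" for y
  define q where "q y = measure M {w \<in> space M. u y < u w}" for y
  have "p = (\<lambda>y. enn2real (upper_tail M (\<lambda>z. - u z) (- u y)))" "q = (\<lambda>y. enn2real (upper_tail M u (u y)))"
    by (simp_all add: fun_eq_iff p_def q_def upper_tail_def measure_def)
  then have [measurable]: "p \<in> borel_measurable M" "q \<in> borel_measurable M"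
    by (simp_all only:) measurable
  have pq: "0 \<le> p y" "p y \<le> 1" "0 \<le> q y" "q y \<le> 1" for y
    by (simp_all add: p_def q_def)
  have "E k \<le> (\<integral>\<^sup>+y. of_nat (n choose (n div 2)) *
      (g y * ennreal (q y ^ n / fact n) + g y * ennreal (p y ^ n / fact n)) \<partial>M)"
    unfolding E_def nn_integral_order_statistic[OF assms(1-3) k] p_def[symmetric] q_def[symmetric]
  proof (intro nn_integral_mono)
    fix y
    have "p y ^ (k - 1) / fact (k - 1) * (q y ^ (K - k) / fact (K - k)) \<le>
        real (n choose (n div 2)) * (p y ^ n / fact n + q y ^ n / fact n)"
      using k pq by (intro power_div_fact_mult_le) (auto simp: n_def)
    then have "ennreal (p y ^ (k - 1) / fact (k - 1) * (q y ^ (K - k) / fact (K - k))) \<le>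
        ennreal (real (n choose (n div 2)) * (q y ^ n / fact n + p y ^ n / fact n))"
      by (rule ennreal_leI[OF order_trans]) (simp add: add.commute)
    also have "\<dots> = of_nat (n choose (n div 2)) * (ennreal (q y ^ n / fact n) + ennreal (p y ^ n / fact n))"
      using pq by (simp add: ennreal_mult' ennreal_of_nat_eq_real_of_nat)
    finally show "g y * ennreal (p y ^ (k - 1) / fact (k - 1) * (q y ^ (K - k) / fact (K - k))) \<le>
        of_nat (n choose (n div 2)) * (g y * ennreal (q y ^ n / fact n) + g y * ennreal (p y ^ n / fact n))"
      by (metis distrib_left mult.left_commute mult_left_mono zero_le)
  qed
  also have "\<dots> = of_nat (n choose (n div 2)) *
      (\<integral>\<^sup>+y. g y * ennreal (q y ^ n / fact n) + g y * ennreal (p y ^ n / fact n) \<partial>M)"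
    by (rule nn_integral_cmult) measurable
  also have "(\<integral>\<^sup>+y. g y * ennreal (q y ^ n / fact n) + g y * ennreal (p y ^ n / fact n) \<partial>M) =
      (\<integral>\<^sup>+y. g y * ennreal (q y ^ n / fact n) \<partial>M) + (\<integral>\<^sup>+y. g y * ennreal (p y ^ n / fact n) \<partial>M)"
    by (rule nn_integral_add) measurable
  also have "(\<integral>\<^sup>+y. g y * ennreal (q y ^ n / fact n) \<partial>M) = E 1"
    unfolding E_def using k
    by (subst nn_integral_order_statistic[OF assms(1-3)]) (auto simp: n_def q_def intro!: nn_integral_cong)
  also have "(\<integral>\<^sup>+y. g y * ennreal (p y ^ n / fact n) \<partial>M) = E K"
    unfolding E_def using k
    by (subst nn_integral_order_statistic[OF assms(1-3)]) (auto simp: n_def p_def intro!: nn_integral_cong)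
  finally show ?thesis unfolding n_def .
qed

end

section \<open>Independent random variables\<close>

lemma sorted_by_id_iff_Suc:
  "sorted_by u id {m..n} x \<longleftrightarrow> (\<forall>i\<in>{m..<n}. u (x i) < u (x (Suc i)))"
proof
  assume step: "\<forall>i\<in>{m..<n}. u (x i) < u (x (Suc i))"
  have "u (x i) < u (x j)" if "m \<le> i" "i < j" "j \<le> n" for i j
    using that
  proof (induction j)
    case (Suc j)
    show ?case
    proof (cases "i = j")
      case False
      with Suc have "u (x i) < u (x j)" by auto
      also have "\<dots> < u (x (Suc j))" using step Suc.prems by auto
      finally show ?thesis .
    qed (use step Suc.prems in auto)
  qed simp
  then show "sorted_by u id {m..n} x"
    unfolding sorted_by_def by auto
qed (auto simp: sorted_by_def)

lemma sorted_event_eq: "sorted_event K X \<beta> = {\<omega>. sorted_by (\<lambda>y. y \<bullet> \<beta>) id {1..K} (\<lambda>i. X i \<omega>)}"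
  by (simp add: sorted_event_def sorted_by_id_iff_Suc)

lemma pred_sorted_by_components:
  assumes "\<And>i. i \<in> I \<Longrightarrow> X i \<in> M \<rightarrow>\<^sub>M N" "finite I" "u \<in> borel_measurable N"
  shows "Measurable.pred M (\<lambda>\<omega>. sorted_by u \<pi> I (\<lambda>i. X i \<omega>))"
proof -
  have "(\<lambda>\<omega>. \<lambda>i\<in>I. X i \<omega>) \<in> M \<rightarrow>\<^sub>M PiM I (\<lambda>_. N)"
    using assms(1) by (rule measurable_restrict)
  from measurable_compose[OF this pred_sorted_by[where J=I and I=I, OF assms(3,2) order_refl]]
  show ?thesis
    by (simp add: sorted_by_restrict)
qed

lemma (in prob_space) nn_integral_iid_PiM:
  assumes "I \<noteq> {}" "\<And>i. i \<in> I \<Longrightarrow> random_variable N (X i)" "indep_vars (\<lambda>_. N) X I"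
    and distr: "\<And>i. i \<in> I \<Longrightarrow> distr M N (X i) = \<mu>"
    and F: "F \<in> borel_measurable (PiM I (\<lambda>_. \<mu>))"
  shows "(\<integral>\<^sup>+\<omega>. F (\<lambda>i\<in>I. X i \<omega>) \<partial>M) = (\<integral>\<^sup>+x. F x \<partial>PiM I (\<lambda>_. \<mu>))"
proof -
  obtain i where "i \<in> I" using assms(1) by auto
  have sets_\<mu>: "sets \<mu> = sets N"
    using distr[OF \<open>i \<in> I\<close>] by (metis sets_distr)
  have X: "(\<lambda>\<omega>. \<lambda>i\<in>I. X i \<omega>) \<in> M \<rightarrow>\<^sub>M PiM I (\<lambda>_. \<mu>)"
    using assms(2) by (intro measurable_restrict) (simp add: measurable_cong_sets[OF refl sets_\<mu>])
  have "distr M (PiM I (\<lambda>_. \<mu>)) (\<lambda>\<omega>. \<lambda>i\<in>I. X i \<omega>) = distr M (PiM I (\<lambda>_. N)) (\<lambda>\<omega>. \<lambda>i\<in>I. X i \<omega>)"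
    by (rule distr_cong) (simp_all add: sets_\<mu> cong: sets_PiM_cong)
  also have "\<dots> = PiM I (\<lambda>i. distr M N (X i))"
    using assms(1-3) by (subst indep_vars_iff_distr_eq_PiM'[symmetric]) auto
  also have "\<dots> = PiM I (\<lambda>_. \<mu>)"
    by (rule PiM_cong) (simp_all add: distr)
  finally show ?thesis
    using nn_integral_distr[OF X, of F] F by simp
qed

lemma (in prob_space) nn_integral_iid_sorted:
  fixes X :: "nat \<Rightarrow> 'a \<Rightarrow> 'b" and u :: "'b \<Rightarrow> real" and g :: "'b \<Rightarrow> ennreal"
  assumes rv: "\<And>i. i \<in> {1..K} \<Longrightarrow> random_variable N (X i)"
    and indep: "indep_vars (\<lambda>_. N) X {1..K}"
    and distr: "\<And>i. i \<in> {1..K} \<Longrightarrow> distr M N (X i) = \<mu>"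
    and [measurable]: "u \<in> borel_measurable N" "g \<in> borel_measurable N"
    and j: "j \<in> {1..K}"
  shows "(\<integral>\<^sup>+\<omega>. g (X j \<omega>) * indicator {\<omega>. sorted_by u id {1..K} (\<lambda>i. X i \<omega>)} \<omega> \<partial>M) =
    (\<integral>\<^sup>+x. g (x j) * (if sorted_by u id {1..K} x then 1 else 0) \<partial>PiM {1..K} (\<lambda>_. \<mu>))"
proof -
  have sets_\<mu>: "sets \<mu> = sets N"
    using distr[OF j] by (metis sets_distr)
  have [measurable]: "u \<in> borel_measurable \<mu>" "g \<in> borel_measurable \<mu>"
    by (simp_all add: measurable_cong_sets[OF sets_\<mu> refl])
  have [measurable]: "Measurable.pred (PiM {1..K} (\<lambda>_. \<mu>)) (sorted_by u id {1..K})"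
    by (rule pred_sorted_by) simp_all
  let ?F = "\<lambda>x. g (x j) * (if sorted_by u id {1..K} x then 1 else 0)"
  have "(\<integral>\<^sup>+\<omega>. g (X j \<omega>) * indicator {\<omega>. sorted_by u id {1..K} (\<lambda>i. X i \<omega>)} \<omega> \<partial>M) =
      (\<integral>\<^sup>+\<omega>. ?F (\<lambda>i\<in>{1..K}. X i \<omega>) \<partial>M)"
    using j by (intro nn_integral_cong) (simp add: sorted_by_restrict indicator_def)
  also have "\<dots> = (\<integral>\<^sup>+x. ?F x \<partial>PiM {1..K} (\<lambda>_. \<mu>))"
  proof (rule nn_integral_iid_PiM[OF _ rv indep distr])
    show "?F \<in> borel_measurable (PiM {1..K} (\<lambda>_. \<mu>))"
      using j by measurable
  qed (use j in auto)
  finally show ?thesis .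
qed

lemma integral_le_of_nat_mult_add:
  fixes f g h :: "'a \<Rightarrow> real"
  assumes "f \<in> borel_measurable M" "\<And>x. 0 \<le> f x" "\<And>x. 0 \<le> g x" "\<And>x. 0 \<le> h x"
    and "integrable M g" "integrable M h"
    and le: "(\<integral>\<^sup>+x. f x \<partial>M) \<le> of_nat c * ((\<integral>\<^sup>+x. g x \<partial>M) + (\<integral>\<^sup>+x. h x \<partial>M))"
  shows "(\<integral>x. f x \<partial>M) \<le> real c * ((\<integral>x. g x \<partial>M) + (\<integral>x. h x \<partial>M))"
proof -
  have fin: "(\<integral>\<^sup>+x. g x \<partial>M) < \<top>" "(\<integral>\<^sup>+x. h x \<partial>M) < \<top>"
    using assms(3-6) by (auto simp: integrable_iff_bounded)
  have "(\<integral>x. f x \<partial>M) = enn2real (\<integral>\<^sup>+x. f x \<partial>M)"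
    using assms(1,2) by (intro integral_eq_nn_integral) auto
  also have "\<dots> \<le> enn2real (of_nat c * ((\<integral>\<^sup>+x. g x \<partial>M) + (\<integral>\<^sup>+x. h x \<partial>M)))"
    using le fin by (intro enn2real_mono) (simp_all add: ennreal_mult_less_top of_nat_less_top)
  also have "\<dots> = real c * (enn2real (\<integral>\<^sup>+x. g x \<partial>M) + enn2real (\<integral>\<^sup>+x. h x \<partial>M))"
    using fin by (simp add: enn2real_mult enn2real_plus)
  also have "\<dots> = real c * ((\<integral>x. g x \<partial>M) + (\<integral>x. h x \<partial>M))"
    using assms(3-6) by (simp add: integral_eq_nn_integral)
  finally show ?thesis .
qed

lemma (in prob_space) integral_order_statistic_le:
  fixes X :: "nat \<Rightarrow> 'a \<Rightarrow> 'b" and u g :: "'b \<Rightarrow> real"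
  assumes rv: "\<And>i. i \<in> {1..K} \<Longrightarrow> random_variable N (X i)"
    and indep: "indep_vars (\<lambda>_. N) X {1..K}"
    and distr: "\<And>i. i \<in> {1..K} \<Longrightarrow> distr M N (X i) = \<mu>"
    and u[measurable]: "u \<in> borel_measurable N" and g[measurable]: "g \<in> borel_measurable N"
    and no_ties: "\<And>t. emeasure \<mu> {y \<in> space \<mu>. u y = t} = 0"
    and g_nonneg: "\<And>y. 0 \<le> g y"
    and int: "integrable M (\<lambda>\<omega>. g (X 1 \<omega>))" "integrable M (\<lambda>\<omega>. g (X K \<omega>))"
    and k: "k \<in> {1..K}"
  defines "A \<equiv> {\<omega>. sorted_by u id {1..K} (\<lambda>i. X i \<omega>)}"
  shows "(\<integral>\<omega>. indicator A \<omega> * g (X k \<omega>) \<partial>M) \<le> real ((K - 1) choose ((K - 1) div 2)) *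
    ((\<integral>\<omega>. indicator A \<omega> * g (X 1 \<omega>) \<partial>M) + (\<integral>\<omega>. indicator A \<omega> * g (X K \<omega>) \<partial>M))"
proof -
  interpret \<mu>: prob_space \<mu>
    using prob_space_distr[OF rv[OF k]] distr[OF k] by simp
  have sets_\<mu>: "sets \<mu> = sets N"
    using distr[OF k] by (metis sets_distr)
  have one_K: "1 \<in> {1..K}" "K \<in> {1..K}"
    using k by auto
  have [measurable]: "X i \<in> M \<rightarrow>\<^sub>M N" if "i \<in> {1..K}" for i
    using rv[OF that] by simp
  have [measurable]: "Measurable.pred M (\<lambda>\<omega>. \<omega> \<in> A)"
    unfolding A_def mem_Collect_eq using rv by (intro pred_sorted_by_components[where N=N]) auto
  have int_A: "integrable M (\<lambda>\<omega>. indicator A \<omega> * g (X j \<omega>))"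
    if "integrable M (\<lambda>\<omega>. g (X j \<omega>))" "j \<in> {1..K}" for j
    using that by (intro Bochner_Integration.integrable_bound[OF that(1)]) (auto simp: indicator_def g_nonneg)
  have PiM: "(\<integral>\<^sup>+\<omega>. indicator A \<omega> * g (X j \<omega>) \<partial>M) =
      (\<integral>\<^sup>+x. ennreal (g (x j)) * (if sorted_by u id {1..K} x then 1 else 0) \<partial>PiM {1..K} (\<lambda>_. \<mu>))"
    if "j \<in> {1..K}" for j
  proof -
    have "(\<integral>\<^sup>+\<omega>. indicator A \<omega> * g (X j \<omega>) \<partial>M) = (\<integral>\<^sup>+\<omega>. ennreal (g (X j \<omega>)) * indicator A \<omega> \<partial>M)"
      by (intro nn_integral_cong) (simp add: indicator_def)
    also have "\<dots> = (\<integral>\<^sup>+x. ennreal (g (x j)) * (if sorted_by u id {1..K} x then 1 else 0) \<partial>PiM {1..K} (\<lambda>_. \<mu>))"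
      using nn_integral_iid_sorted[OF rv indep distr u measurable_compose[OF g measurable_ennreal] that]
      unfolding A_def by simp
    finally show ?thesis .
  qed
  have "u \<in> borel_measurable \<mu>" "(\<lambda>y. ennreal (g y)) \<in> borel_measurable \<mu>"
    by (simp_all add: measurable_cong_sets[OF sets_\<mu> refl])
  from \<mu>.nn_integral_order_statistic_le[OF this no_ties k]
  show ?thesis
    unfolding PiM[OF k, symmetric] PiM[OF one_K(1), symmetric] PiM[OF one_K(2), symmetric]
    by (rule integral_le_of_nat_mult_add[rotated -1])
      (use k g_nonneg int_A[OF int(1) one_K(1)] int_A[OF int(2) one_K(2)] in simp_all)
qed

section \<open>Outer products and the Loewner order\<close>

lemma outer_self_mult_vec: "outer_self x *v v = (x \<bullet> v) *\<^sub>R x"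
  unfolding outer_self_def
  by (simp add: vec_eq_iff matrix_vector_mult_def inner_vec_def sum_distrib_left algebra_simps)

lemma inner_outer_self_mult_vec: "v \<bullet> (outer_self x *v v) = (v \<bullet> x)\<^sup>2"
  by (simp add: outer_self_mult_vec inner_commute power2_eq_square)

lemma bounded_linear_quadratic_form: "bounded_linear (\<lambda>A :: real^'n^'n. v \<bullet> (A *v v))"
  unfolding linear_conv_bounded_linear[symmetric]
  by (rule linearI) (simp_all add: matrix_vector_mult_add_rdistrib inner_add_right
      scaleR_matrix_vector_assoc[symmetric])

lemma norm_outer_self: "norm (outer_self x) = (norm x)\<^sup>2"
proof -
  have row: "outer_self x $ i = x $ i *\<^sub>R x" for i
    by (simp add: outer_self_def vec_eq_iff)
  have "norm (outer_self x) = L2_set (\<lambda>i. norm (outer_self x $ i)) UNIV"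
    by (rule norm_vec_def)
  also have "\<dots> = L2_set (\<lambda>i. norm (x $ i)) UNIV * norm x"
    by (simp add: row L2_set_left_distrib)
  also have "\<dots> = norm x * norm x"
    by (simp only: norm_vec_def[symmetric])
  finally show ?thesis
    by (simp add: power2_eq_square)
qed

lemma measurable_outer_self[measurable]: "outer_self \<in> borel_measurable (borel :: (real^'n) measure)"
  unfolding outer_self_def by (intro borel_measurable_continuous_onI continuous_intros)

lemma (in finite_measure) integrable_outer_self:
  assumes [measurable]: "X \<in> borel_measurable M" and "AE \<omega> in M. norm (X \<omega>) \<le> c"
  shows "integrable M (\<lambda>\<omega>. outer_self (X \<omega>))"
proof (rule integrable_const_bound)
  show "AE \<omega> in M. norm (outer_self (X \<omega>)) \<le> c\<^sup>2"
    using assms(2) by eventually_elim (simp add: norm_outer_self power_mono)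
qed measurable

lemma emeasure_density_hyperplane:
  fixes \<beta> :: "'a::euclidean_space"
  assumes "\<beta> \<noteq> 0" and [measurable]: "f \<in> borel_measurable borel"
  shows "emeasure (density lborel f) {y \<in> space (density lborel f). y \<bullet> \<beta> = t} = 0"
proof -
  have H: "{y \<in> space (density lborel f). y \<bullet> \<beta> = t} = {y. \<beta> \<bullet> y = t}"
    by (auto simp: inner_commute)
  have [measurable]: "{y. \<beta> \<bullet> y = t} \<in> sets lborel"
    by measurable
  have "{y. \<beta> \<bullet> y = t} \<in> null_sets lborel"
    using negligible_hyperplane[of \<beta> t] assms(1)
    by (simp add: negligible_iff_null_sets null_sets_completion_iff)
  then have "AE y in lborel. y \<in> {y. \<beta> \<bullet> y = t} \<longrightarrow> f y = 0"
    by (rule AE_not_in[THEN AE_mp]) simp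
  then have "{y. \<beta> \<bullet> y = t} \<in> null_sets (density lborel f)"
    by (subst null_sets_density_iff) auto
  then show ?thesis
    unfolding H by (simp add: null_sets_def)
qed

lemma (in prob_space) loewner_le_order_statistic_outer_self:
  fixes X :: "nat \<Rightarrow> 'a \<Rightarrow> real^'d" and u :: "real^'d \<Rightarrow> real"
  assumes rv: "\<And>i. i \<in> {1..K} \<Longrightarrow> X i \<in> borel_measurable M"
    and indep: "indep_vars (\<lambda>_. borel) X {1..K}"
    and distr: "\<And>i. i \<in> {1..K} \<Longrightarrow> distr M borel (X i) = \<mu>"
    and [measurable]: "u \<in> borel_measurable borel"
    and no_ties: "\<And>t. emeasure \<mu> {y \<in> space \<mu>. u y = t} = 0"
    and int: "\<And>i. i \<in> {1..K} \<Longrightarrow> integrable M (\<lambda>\<omega>. outer_self (X i \<omega>))"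
    and k: "k \<in> {1..K}"
  defines "A \<equiv> {\<omega>. sorted_by u id {1..K} (\<lambda>i. X i \<omega>)}"
  shows "loewner_le (\<integral>\<omega>. indicator A \<omega> *\<^sub>R outer_self (X k \<omega>) \<partial>M)
    (real ((K - 1) choose ((K - 1) div 2)) *\<^sub>R
      (\<integral>\<omega>. indicator A \<omega> *\<^sub>R (outer_self (X 1 \<omega>) + outer_self (X K \<omega>)) \<partial>M))"
  unfolding loewner_le_def
proof
  fix v :: "real^'d"
  have [measurable]: "X i \<in> borel_measurable M" if "i \<in> {1..K}" for i
    using rv[OF that] .
  have [measurable]: "Measurable.pred M (\<lambda>\<omega>. \<omega> \<in> A)"
    unfolding A_def mem_Collect_eq using rv by (intro pred_sorted_by_components[where N=borel]) auto
  have int_A: "integrable M (\<lambda>\<omega>. indicator A \<omega> *\<^sub>R outer_self (X j \<omega>))" if "j \<in> {1..K}" for j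
    using that by (intro Bochner_Integration.integrable_bound[OF int[OF that]]) (auto simp: indicator_def)
  have quad: "v \<bullet> ((\<integral>\<omega>. indicator A \<omega> *\<^sub>R outer_self (X j \<omega>) \<partial>M) *v v) =
      (\<integral>\<omega>. indicator A \<omega> * (v \<bullet> X j \<omega>)\<^sup>2 \<partial>M)" if "j \<in> {1..K}" for j
    by (simp add: integral_bounded_linear[OF bounded_linear_quadratic_form int_A[OF that], symmetric]
        scaleR_matrix_vector_assoc[symmetric] inner_outer_self_mult_vec)
  have "integrable M (\<lambda>\<omega>. v \<bullet> (outer_self (X j \<omega>) *v v))" if "j \<in> {1..K}" for j
    by (rule integrable_bounded_linear[OF bounded_linear_quadratic_form int[OF that]])
  then have int_sq: "integrable M (\<lambda>\<omega>. (v \<bullet> X j \<omega>)\<^sup>2)" if "j \<in> {1..K}" for j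
    using that by (simp add: inner_outer_self_mult_vec)
  have "v \<bullet> ((\<integral>\<omega>. indicator A \<omega> *\<^sub>R outer_self (X k \<omega>) \<partial>M) *v v) =
      (\<integral>\<omega>. indicator A \<omega> * (v \<bullet> X k \<omega>)\<^sup>2 \<partial>M)"
    using k by (rule quad)
  also have "\<dots> \<le> real ((K - 1) choose ((K - 1) div 2)) *
      ((\<integral>\<omega>. indicator A \<omega> * (v \<bullet> X 1 \<omega>)\<^sup>2 \<partial>M) + (\<integral>\<omega>. indicator A \<omega> * (v \<bullet> X K \<omega>)\<^sup>2 \<partial>M))"
    unfolding A_def using k
    by (intro integral_order_statistic_le[OF _ indep distr _ _ no_ties _ int_sq int_sq]) auto
  also have "\<dots> = v \<bullet> ((real ((K - 1) choose ((K - 1) div 2)) *\<^sub>R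
      (\<integral>\<omega>. indicator A \<omega> *\<^sub>R (outer_self (X 1 \<omega>) + outer_self (X K \<omega>)) \<partial>M)) *v v)"
    using k int_A[of 1] int_A[of K]
    by (simp add: scaleR_add_right quad scaleR_matrix_vector_assoc[symmetric]
        matrix_vector_mult_add_rdistrib inner_add_right distrib_left)
  finally show "v \<bullet> ((\<integral>\<omega>. indicator A \<omega> *\<^sub>R outer_self (X k \<omega>) \<partial>M) *v v) \<le>
      v \<bullet> ((real ((K - 1) choose ((K - 1) div 2)) *\<^sub>R
      (\<integral>\<omega>. indicator A \<omega> *\<^sub>R (outer_self (X 1 \<omega>) + outer_self (X K \<omega>)) \<partial>M)) *v v)" .
qed

theorem lemma13:
  fixes M :: "'w measure" and X :: "nat \<Rightarrow> 'w \<Rightarrow> real^'d"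
    and f :: "real^'d \<Rightarrow> ennreal" and \<beta> :: "real^'d"
    and K k :: nat and xmax :: real
  assumes "prob_space M"
    and "K \<ge> 3"
    and "\<And>i. i \<in> {1..K} \<Longrightarrow> X i \<in> borel_measurable M"
    and "prob_space.indep_vars M (\<lambda>_. borel) X {1..K}"
    and "f \<in> borel_measurable borel"
    and "\<And>i. i \<in> {1..K} \<Longrightarrow> distr M borel (X i) = density lborel f"
    and "\<And>i. i \<in> {1..K} \<Longrightarrow> (AE \<omega> in M. norm (X i \<omega>) \<le> xmax)"
    and "2 \<le> k" and "k \<le> K - 1"
  shows "loewner_le
     (\<integral>\<omega>. indicator (sorted_event K X \<beta>) \<omega> *\<^sub>R outer_self (X k \<omega>) \<partial>M)
     (real (K - 1 choose nat \<lceil>real (K - 1) / 2\<rceil>) *\<^sub>R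
       (\<integral>\<omega>. indicator (sorted_event K X \<beta>) \<omega> *\<^sub>R
              (outer_self (X 1 \<omega>) + outer_self (X K \<omega>)) \<partial>M))"
proof (cases "\<beta> = 0")
  case True
  with \<open>K \<ge> 3\<close> have "sorted_event K X \<beta> = {}"
    by (force simp: sorted_event_def)
  then show ?thesis
    by (simp add: loewner_le_def)
next
  case False
  interpret prob_space M by fact
  show ?thesis
    unfolding sorted_event_eq binomial_ceiling_half
  proof (rule loewner_le_order_statistic_outer_self[OF assms(3,4,6)])
    show "emeasure (density lborel f) {y \<in> space (density lborel f). y \<bullet> \<beta> = t} = 0" for t
      using False assms(5) by (rule emeasure_density_hyperplane)
    show "integrable M (\<lambda>\<omega>. outer_self (X i \<omega>))" if "i \<in> {1..K}" for i
      using assms(3,7)[OF that] by (rule integrable_outer_self)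
  qed (use assms in auto)
qed

end
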